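(* Let $Q$ and $W$ satisfy the standing assumptions with $W=Y$, let $l\ge1$, and assume $Q$ is future unique w.r.t. $I^l_l$. Then $\hat Q^{l\triangledown}$ and $\hat Q^{I^l_l}$ are bisimilar w.r.t. $Y$, and $\hat Q^{I^l_l}$ is simulated by $\hat Q^{I^l_0}$ w.r.t. $Y$.
   Context: Strings and signals: $\diamond$ is a symbol not in any other set considered. For a set $A$ and $l\in\mathbb N_0$, $A^l$ is the set of strings of length $l$ over $A$, indexed $\zeta=\zeta(0)\cdots\zeta(l-1)$; $\lambda$ is the empty string and $\cdot$ denotes concatenation. For a map $w$ on $\mathbb Z$ (or a string) and integers $t_1\le t_2$, $w|_{[t_1,t_2]}=w(t_1)\cdots w(t_2)$ is the string of length $t_2-t_1+1$ (absolute time forgotten); if $t_2<t_1$ it is $\lambda$. State machines: a state machine is $Q=(X,U,Y,\delta,X_0)$ with $X_0\subseteq X$, $\delta\subseteq X\times U\times Y\times X$. Let $H_\delta(x)=\{y:\exists u,x'.\,(x,u,y,x')\in\delta\}$, $F_\delta(x,u)=\{x':\exists y\in H_\delta(x).\,(x,u,y,x')\in\delta\}$. The full behavior $\mathcal B_f(Q)$ is the set of $(\mu,\nu,\xi)\in(U\times Y\times X)^{\mathbb N_0}$ with $\xi(0)\in X_0$ and $(\xi(k),\mu(k),\nu(k),\xi(k+1))\in\delta$ for all $k\in\mathbb N_0$. $Q$ is live and reachable if every $x\in X_0$ is $\xi(0)$ for some $(\mu,\nu,\xi)\in\mathcal B_f(Q)$ and every $x\in X$ is $\xi(k)$ for some such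 trajectory and some $k$. Standing assumptions: $Q=(X,U,Y,\delta,X_0)$ is live and reachable and satisfies $(x,u,y,x')\in\delta\iff(x'\in F_\delta(x,u)\wedge y\in H_\delta(x))$ for all $x,x'\in X,u\in U,y\in Y$; the external signal space $W$ is finite and either $W=U\times Y$ or $W=Y$ (here $W=Y$, with $\pi_W(u,y)=\pi_Y(u,y)=y$). Behaviors: $\mathcal B_S(Q)$ is the set of pairs $(w,\xi)$ of maps on $\mathbb Z$ with $w(k)=\xi(k)=\diamond$ for $k<0$ and $(w(k),\xi(k))=(\nu(k),\xi'(k))$ for $k\ge0$, for some $(\mu,\nu,\xi')\in\mathcal B_f(Q)$. Corresponding strings: for integers $a,b$ and $x\in X$, $E^{[a,b]}(x)=\{\zeta:\exists(w,\xi)\in\mathcal B_S(Q),k\in\mathbb N_0:\ \xi(k)=x,\ \zeta=w|_{[k+a,k+b]}\}$. For $l,m\in\mathbb N_0$ with $m\le l$, $I^l_m=[m-l,m-1]$; in particular $I^l_l=[0,l-1]$, $I^l_0=[-l,-1]$. Future uniqueness: $Q$ is future unique w.r.t. $I^l_m$ if for all $x\in X$ and $\zeta,\zeta'\in E^{I^l_m}(x)$, $\zeta|_{[l-m,l-1]}=\zeta'|_{[l-m,l-1]}$. Abstract state machine: $\hat Q^{I^l_m}=(\hat X^{I^l_m},U,Y,\hat\delta^{I^l_m},\hat X^{I^l_m}_0)$ with $\hat X^{I^l_m}=\bigcup_{x\in X}E^{I^l_m}(x)$, $\hat X^{I^l_m}_0=\bigcup_{x\in X_0}E^{I^l_m}(x)$,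 and $(\hat x,u,y,\hat x')\in\hat\delta^{I^l_m}$ iff (1) $\hat x'|_{[0,l-m-1]}=(\hat x|_{[0,l-m-1]}\cdot\pi_W(u,y))|_{[1,l-m]}$, (2) $\hat x|_{[l-m,l-1]}=(\pi_W(u,y)\cdot\hat x'|_{[l-m,l-2]})|_{[0,m-1]}$, and (3) there are $x,x'\in X$ with $\hat x\in E^{I^l_m}(x)$, $\hat x'\in E^{I^l_m}(x')$, $(x,u,y,x')\in\delta$. Quotient state machine (for $W=Y$): $\hat Q^{l\triangledown}=(\hat X^{l\triangledown},U,Y,\hat\delta^{l\triangledown},\hat X^{l\triangledown}_0)$ with $\hat X^{l\triangledown}=\{E^{I^l_l}(x):x\in X\}$, $\hat X^{l\triangledown}_0=\{E^{I^l_l}(x):x\in X_0\}$, and $(\hat x,u,y,\hat x')\in\hat\delta^{l\triangledown}$ iff there exist $x,x'\in X$ with $\hat x=E^{I^l_l}(x)$, $\hat x'=E^{I^l_l}(x')$ and $(x,u,y,x')\in\delta$. Simulation relations: for state machines $Q_i=(X_i,U,Y,\delta_i,X_{0,i})$, $i=1,2$, and $V\in\{U\times Y,Y\}$, a relation $\mathcal R\subseteq X_1\times X_2$ is a simulation relation from $Q_1$ to $Q_2$ w.r.t. $V$ if (a) for every $x_1\in X_{0,1}$ there is $x_2\in X_{0,2}$ with $(x_1,x_2)\in\mathcal R$, and (b) for all $(x_1,x_2)\in\mathcal R$ and $(x_1,u_1,y_1,x_1')\in\delta_1$ there exist $u_2,y_2,x_2'$ with $(x_2,u_2,y_2,x_2')\in\delta_2$,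 $(x_1',x_2')\in\mathcal R$ and $\pi_V(u_1,y_1)=\pi_V(u_2,y_2)$. $Q_1$ is simulated by $Q_2$ w.r.t. $V$ if such a relation exists; $Q_1,Q_2$ are bisimilar w.r.t. $V$ if there is a simulation relation $\mathcal R$ from $Q_1$ to $Q_2$ w.r.t. $V$ such that $\mathcal R^{-1}=\{(x_2,x_1):(x_1,x_2)\in\mathcal R\}$ is a simulation relation from $Q_2$ to $Q_1$ w.r.t. $V$. *)

theory Defs
  imports Main
begin

(* State machine Q = (X, U, Y, delta, X0). The symbol \<diamond> is modelled by None,
   so signal values / string symbols over W = Y are of type 'y option. *)
record ('x, 'u, 'y) sm =
  SX :: "'x set"
  SU :: "'u set"
  SY :: "'y set"
  Sdelta :: "('x \<times> 'u \<times> 'y \<times> 'x) set"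
  SX0 :: "'x set"

definition is_state_machine :: "('x, 'u, 'y) sm \<Rightarrow> bool" where
  "is_state_machine Q \<longleftrightarrow> SX0 Q \<subseteq> SX Q \<and> Sdelta Q \<subseteq> SX Q \<times> SU Q \<times> SY Q \<times> SX Q"

definition Hd :: "('x, 'u, 'y) sm \<Rightarrow> 'x \<Rightarrow> 'y set" where
  "Hd Q x = {y. \<exists>u x'. (x, u, y, x') \<in> Sdelta Q}"

definition Fd :: "('x, 'u, 'y) sm \<Rightarrow> 'x \<Rightarrow> 'u \<Rightarrow> 'x set" where
  "Fd Q x u = {x'. \<exists>y\<in>Hd Q x. (x, u, y, x') \<in> Sdelta Q}"

definition full_behavior :: "('x, 'u, 'y) sm \<Rightarrow> ((nat \<Rightarrow> 'u) \<times> (nat \<Rightarrow> 'y) \<times> (nat \<Rightarrow> 'x)) set" where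
  "full_behavior Q = {(\<mu>, \<nu>, \<xi>).
     (\<forall>k. \<mu> k \<in> SU Q \<and> \<nu> k \<in> SY Q \<and> \<xi> k \<in> SX Q) \<and> \<xi> 0 \<in> SX0 Q \<and>
     (\<forall>k. (\<xi> k, \<mu> k, \<nu> k, \<xi> (Suc k)) \<in> Sdelta Q)}"

definition live_reachable :: "('x, 'u, 'y) sm \<Rightarrow> bool" where
  "live_reachable Q \<longleftrightarrow>
     (\<forall>x\<in>SX0 Q. \<exists>\<mu> \<nu> \<xi>. (\<mu>, \<nu>, \<xi>) \<in> full_behavior Q \<and> \<xi> 0 = x) \<and>
     (\<forall>x\<in>SX Q. \<exists>\<mu> \<nu> \<xi> k. (\<mu>, \<nu>, \<xi>) \<in> full_behavior Q \<and> \<xi> k = x)"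

definition standing_assms_Y :: "('x, 'u, 'y) sm \<Rightarrow> bool" where
  "standing_assms_Y Q \<longleftrightarrow> is_state_machine Q \<and> live_reachable Q \<and>
     (\<forall>x\<in>SX Q. \<forall>u\<in>SU Q. \<forall>y\<in>SY Q. \<forall>x'\<in>SX Q.
        (x, u, y, x') \<in> Sdelta Q \<longleftrightarrow> (x' \<in> Fd Q x u \<and> y \<in> Hd Q x)) \<and>
     finite (SY Q)"

definition behS :: "('x, 'u, 'y) sm \<Rightarrow> ((int \<Rightarrow> 'y option) \<times> (int \<Rightarrow> 'x option)) set" where
  "behS Q = {(w, \<xi>). \<exists>\<mu> \<nu> \<xi>'. (\<mu>, \<nu>, \<xi>') \<in> full_behavior Q \<and>
     (\<forall>k::int. (k < 0 \<longrightarrow> w k = None \<and> \<xi> k = None) \<and>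
               (0 \<le> k \<longrightarrow> w k = Some (\<nu> (nat k)) \<and> \<xi> k = Some (\<xi>' (nat k))))}"

definition sig_restr :: "(int \<Rightarrow> 'a) \<Rightarrow> int \<Rightarrow> int \<Rightarrow> 'a list" where
  "sig_restr w t1 t2 = map w [t1..t2]"

(* \<zeta>|_[t1,t2] for a string (list), indices 0-based *)
definition str_restr :: "'a list \<Rightarrow> int \<Rightarrow> int \<Rightarrow> 'a list" where
  "str_restr \<zeta> t1 t2 = map (\<lambda>i. \<zeta> ! nat i) [t1..t2]"

definition Estr :: "('x, 'u, 'y) sm \<Rightarrow> int \<Rightarrow> int \<Rightarrow> 'x \<Rightarrow> 'y option list set" where
  "Estr Q a b x = {\<zeta>. \<exists>w \<xi> k. (w, \<xi>) \<in> behS Q \<and> \<xi> (int k) = Some x \<and>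
                        \<zeta> = sig_restr w (int k + a) (int k + b)}"

definition EI :: "('x, 'u, 'y) sm \<Rightarrow> nat \<Rightarrow> nat \<Rightarrow> 'x \<Rightarrow> 'y option list set" where
  "EI Q l m x = Estr Q (int m - int l) (int m - 1) x"

definition future_unique :: "('x, 'u, 'y) sm \<Rightarrow> nat \<Rightarrow> nat \<Rightarrow> bool" where
  "future_unique Q l m \<longleftrightarrow>
     (\<forall>x\<in>SX Q. \<forall>\<zeta>\<in>EI Q l m x. \<forall>\<zeta>'\<in>EI Q l m x.
        str_restr \<zeta> (int l - int m) (int l - 1) = str_restr \<zeta>' (int l - int m) (int l - 1))"

(* abstract state machine \<hat>Q^{I^l_m} for W = Y (\<pi>_W(u,y) = y) *)
definition abstract_sm :: "('x, 'u, 'y) sm \<Rightarrow> nat \<Rightarrow> nat \<Rightarrow> ('y option list, 'u, 'y) sm" where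
  "abstract_sm Q l m =
     \<lparr> SX = (\<Union>x\<in>SX Q. EI Q l m x), SU = SU Q, SY = SY Q,
       Sdelta = {(xh, u, y, xh').
          str_restr xh' 0 (int l - int m - 1) =
            str_restr (str_restr xh 0 (int l - int m - 1) @ [Some y]) 1 (int l - int m) \<and>
          str_restr xh (int l - int m) (int l - 1) =
            str_restr ([Some y] @ str_restr xh' (int l - int m) (int l - 2)) 0 (int m - 1) \<and>
          (\<exists>x\<in>SX Q. \<exists>x'\<in>SX Q. xh \<in> EI Q l m x \<and> xh' \<in> EI Q l m x' \<and> (x, u, y, x') \<in> Sdelta Q)},
       SX0 = (\<Union>x\<in>SX0 Q. EI Q l m x) \<rparr>"

definition quotient_sm :: "('x, 'u, 'y) sm \<Rightarrow> nat \<Rightarrow> ('y option list set, 'u, 'y) sm" where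
  "quotient_sm Q l =
     \<lparr> SX = {EI Q l l x | x. x \<in> SX Q}, SU = SU Q, SY = SY Q,
       Sdelta = {(xh, u, y, xh'). \<exists>x\<in>SX Q. \<exists>x'\<in>SX Q.
          xh = EI Q l l x \<and> xh' = EI Q l l x' \<and> (x, u, y, x') \<in> Sdelta Q},
       SX0 = {EI Q l l x | x. x \<in> SX0 Q} \<rparr>"

definition sim_rel_Y :: "('a, 'u, 'y) sm \<Rightarrow> ('b, 'u, 'y) sm \<Rightarrow> ('a \<times> 'b) set \<Rightarrow> bool" where
  "sim_rel_Y Q1 Q2 R \<longleftrightarrow> R \<subseteq> SX Q1 \<times> SX Q2 \<and>
     (\<forall>x1\<in>SX0 Q1. \<exists>x2\<in>SX0 Q2. (x1, x2) \<in> R) \<and>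
     (\<forall>x1 x2 u1 y1 x1'. (x1, x2) \<in> R \<and> (x1, u1, y1, x1') \<in> Sdelta Q1 \<longrightarrow>
        (\<exists>u2 y2 x2'. (x2, u2, y2, x2') \<in> Sdelta Q2 \<and> (x1', x2') \<in> R \<and> y1 = y2))"

definition simulated_by_Y :: "('a, 'u, 'y) sm \<Rightarrow> ('b, 'u, 'y) sm \<Rightarrow> bool" where
  "simulated_by_Y Q1 Q2 \<longleftrightarrow> (\<exists>R. sim_rel_Y Q1 Q2 R)"

definition bisimilar_Y :: "('a, 'u, 'y) sm \<Rightarrow> ('b, 'u, 'y) sm \<Rightarrow> bool" where
  "bisimilar_Y Q1 Q2 \<longleftrightarrow> (\<exists>R. sim_rel_Y Q1 Q2 R \<and> sim_rel_Y Q2 Q1 (converse R))"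

end

theory Submission
  imports Defs
begin

text \<open>
  Under future uniqueness every reachable state has exactly one future string, so the classes of
  the quotient machine are singletons and membership is a bisimulation between the quotient and the
  future abstraction.  What has to be checked is that a transition \<open>x \<rightarrow> x'\<close> of \<open>Q\<close> is matched by
  the future strings of \<open>x\<close> and \<open>x'\<close>; this follows by splicing a trajectory through \<open>x\<close> with
  one leaving \<open>x'\<close>.

  For the simulation of the future abstraction by the past abstraction, a future string \<open>\<zeta>\<close> is
  related to a past string \<open>\<eta>\<close> when every window of \<open>l + 1\<close> consecutive symbols of \<open>\<eta> \<cdot> \<zeta>\<close> is a
  step of the past machine.  The first window provides the step matching the output \<open>hd \<zeta>\<close>;
  afterwards the windows shift by one, and the one new window is realized by a trajectory through
  the transition taken, again by future uniqueness.
\<close>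

lemma map_upto_eq_map_upt: "map f [a..b] = map (\<lambda>j. f (a + int j)) [0..<nat (b - a + 1)]"
  by (rule nth_equalityI) auto

lemma str_restr_eq_take: "n \<le> length xs \<Longrightarrow> str_restr xs 0 (int n - 1) = take n xs"
  unfolding str_restr_def map_upto_eq_map_upt by (rule nth_equalityI) auto

lemma str_restr_eq_tl: "length xs = Suc n \<Longrightarrow> str_restr xs 1 (int n) = tl xs"
  unfolding str_restr_def map_upto_eq_map_upt
  by (rule nth_equalityI) (auto simp: nth_tl nat_add_distrib)

lemma str_restr_empty: "b < a \<Longrightarrow> str_restr xs a b = []"
  unfolding str_restr_def by simp

definition signal :: "(nat \<Rightarrow> 'y) \<Rightarrow> int \<Rightarrow> 'y option" where
  "signal \<nu> i = (if i < 0 then None else Some (\<nu> (nat i)))"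

text \<open>
  For an output sequence \<open>\<nu>\<close>, \<open>future_string \<nu> k l\<close> is \<open>\<nu>(k) \<cdots> \<nu>(k + l - 1)\<close> and
  \<open>past_string \<nu> k l\<close> is \<open>\<nu>(k - l) \<cdots> \<nu>(k - 1)\<close>, with \<open>None\<close> (the symbol \<open>\<diamond>\<close>) at negative
  times; they are the strings of \<open>E\<^bsup>I\<^sup>l\<^sub>l\<^esup>\<close> and \<open>E\<^bsup>I\<^sup>l\<^sub>0\<^esup>\<close> seen at time \<open>k\<close>.
\<close>

definition future_string :: "(nat \<Rightarrow> 'y) \<Rightarrow> nat \<Rightarrow> nat \<Rightarrow> 'y option list" where
  "future_string \<nu> k l = map (\<lambda>j. Some (\<nu> (k + j))) [0..<l]"

definition past_string :: "(nat \<Rightarrow> 'y) \<Rightarrow> nat \<Rightarrow> nat \<Rightarrow> 'y option list" where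
  "past_string \<nu> k l = map (\<lambda>j. if k + j < l then None else Some (\<nu> (k + j - l))) [0..<l]"

lemma length_future_string [simp]: "length (future_string \<nu> k l) = l"
  by (simp add: future_string_def)

lemma length_past_string [simp]: "length (past_string \<nu> k l) = l"
  by (simp add: past_string_def)

lemma future_string_Suc:
  "1 \<le> l \<Longrightarrow> future_string \<nu> k l = Some (\<nu> k) # take (l - 1) (future_string \<nu> (Suc k) l)"
  unfolding future_string_def by (rule nth_equalityI) (auto simp: nth_Cons split: nat.splits)

lemma last_future_string: "1 \<le> l \<Longrightarrow> last (future_string \<nu> k l) = Some (\<nu> (k + l - 1))"
  unfolding future_string_def by (simp add: last_map)

lemma past_string_Suc:
  assumes "1 \<le> l"
  shows "past_string \<nu> (Suc k) l = tl (past_string \<nu> k l) @ [Some (\<nu> k)]"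
proof (rule nth_equalityI)
  fix i assume "i < length (past_string \<nu> (Suc k) l)"
  with assms have "i < l" "\<not> i < l - 1 \<Longrightarrow> Suc (k + i) - l = k" by auto
  then show "past_string \<nu> (Suc k) l ! i = (tl (past_string \<nu> k l) @ [Some (\<nu> k)]) ! i"
    using assms unfolding past_string_def by (auto simp: nth_append nth_tl)
qed (use assms in \<open>simp add: past_string_def\<close>)

lemma past_string_add_self: "past_string \<nu> (k + l) l = future_string \<nu> k l"
  unfolding past_string_def future_string_def by auto

lemma past_string_window:
  assumes "i + l \<le> L" "L \<le> k + i + l"
  shows "take l (drop i (past_string \<nu> k L)) = past_string \<nu> (k + i + l - L) l"
  unfolding past_string_def using assms by (intro nth_equalityI) (auto simp: add.assoc)

lemma past_string_nth:
  "j < L \<Longrightarrow> L \<le> k + j \<Longrightarrow> past_string \<nu> k L ! j = Some (\<nu> (k + j - L))"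
  unfolding past_string_def by simp

lemma past_string_append_future_string:
  "past_string \<nu> 0 l @ future_string \<nu> 0 l = past_string \<nu> l (2 * l)"
  unfolding past_string_def future_string_def by (rule nth_equalityI) (auto simp: nth_append)

lemma behS_iff: "(w, \<xi>) \<in> behS Q \<longleftrightarrow> (\<exists>\<mu> \<nu> \<xi>'. (\<mu>, \<nu>, \<xi>') \<in> full_behavior Q \<and>
   w = signal \<nu> \<and> \<xi> = (\<lambda>i. if i < 0 then None else Some (\<xi>' (nat i))))"
  unfolding behS_def signal_def by (auto simp: fun_eq_iff) (metis not_less)+

lemma Estr_iff: "\<zeta> \<in> Estr Q a b x \<longleftrightarrow> (\<exists>\<mu> \<nu> \<xi> k. (\<mu>, \<nu>, \<xi>) \<in> full_behavior Q \<and> \<xi> k = x \<and>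
    \<zeta> = map (\<lambda>j. signal \<nu> (int k + a + int j)) [0..<nat (b - a + 1)])"
proof
  assume "\<zeta> \<in> Estr Q a b x"
  then show "\<exists>\<mu> \<nu> \<xi> k. (\<mu>, \<nu>, \<xi>) \<in> full_behavior Q \<and> \<xi> k = x \<and>
      \<zeta> = map (\<lambda>j. signal \<nu> (int k + a + int j)) [0..<nat (b - a + 1)]"
    unfolding Estr_def behS_iff sig_restr_def map_upto_eq_map_upt
    by (auto split: if_splits) blast
next
  assume "\<exists>\<mu> \<nu> \<xi> k. (\<mu>, \<nu>, \<xi>) \<in> full_behavior Q \<and> \<xi> k = x \<and>
      \<zeta> = map (\<lambda>j. signal \<nu> (int k + a + int j)) [0..<nat (b - a + 1)]"
  then obtain \<mu> \<nu> \<xi> k where traj: "(\<mu>, \<nu>, \<xi>) \<in> full_behavior Q" "\<xi> k = x"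
    and \<zeta>: "\<zeta> = map (\<lambda>j. signal \<nu> (int k + a + int j)) [0..<nat (b - a + 1)]"
    by blast
  define \<xi>\<^sub>S where "\<xi>\<^sub>S i = (if i < 0 then None else Some (\<xi> (nat i)))" for i :: int
  have "(signal \<nu>, \<xi>\<^sub>S) \<in> behS Q" "\<xi>\<^sub>S (int k) = Some x"
    using traj unfolding behS_iff \<xi>\<^sub>S_def by (blast, simp)
  moreover have "\<zeta> = sig_restr (signal \<nu>) (int k + a) (int k + b)"
    unfolding sig_restr_def map_upto_eq_map_upt \<zeta> by (simp add: algebra_simps)
  ultimately show "\<zeta> \<in> Estr Q a b x" unfolding Estr_def by blast
qed

lemma EI_future_iff: "\<zeta> \<in> EI Q l l x \<longleftrightarrow>
    (\<exists>\<mu> \<nu> \<xi> k. (\<mu>, \<nu>, \<xi>) \<in> full_behavior Q \<and> \<xi> k = x \<and> \<zeta> = future_string \<nu> k l)"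
proof -
  have "map (\<lambda>j. signal \<nu> (int k + (int l - int l) + int j)) [0..<nat (int l - 1 - (int l - int l) + 1)]
      = future_string \<nu> k l" for \<nu> k
    unfolding future_string_def signal_def by (auto simp: nat_add_distrib)
  then show ?thesis unfolding EI_def Estr_iff by metis
qed

lemma EI_past_iff: "\<eta> \<in> EI Q l 0 x \<longleftrightarrow>
    (\<exists>\<mu> \<nu> \<xi> k. (\<mu>, \<nu>, \<xi>) \<in> full_behavior Q \<and> \<xi> k = x \<and> \<eta> = past_string \<nu> k l)"
proof -
  have "map (\<lambda>j. signal \<nu> (int k + (int 0 - int l) + int j)) [0..<nat (int 0 - 1 - (int 0 - int l) + 1)]
      = past_string \<nu> k l" for \<nu> k
    unfolding past_string_def signal_def by (rule nth_equalityI) (auto intro!: arg_cong[where f = \<nu>])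
  then show ?thesis unfolding EI_def Estr_iff by metis
qed

lemma length_EI_future: "\<zeta> \<in> EI Q l l x \<Longrightarrow> length \<zeta> = l"
  unfolding EI_future_iff by auto

lemma length_EI_past: "\<eta> \<in> EI Q l 0 x \<Longrightarrow> length \<eta> = l"
  unfolding EI_past_iff by auto

lemma full_behaviorD:
  assumes "(\<mu>, \<nu>, \<xi>) \<in> full_behavior Q"
  shows "\<mu> k \<in> SU Q" "\<nu> k \<in> SY Q" "\<xi> k \<in> SX Q" "\<xi> 0 \<in> SX0 Q"
    and "(\<xi> k, \<mu> k, \<nu> k, \<xi> (Suc k)) \<in> Sdelta Q"
  using assms unfolding full_behavior_def by auto

lemma past_string_mem_EI_past:
  "(\<mu>, \<nu>, \<xi>) \<in> full_behavior Q \<Longrightarrow> past_string \<nu> k l \<in> EI Q l 0 (\<xi> k)"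
  unfolding EI_past_iff by blast

lemma future_string_mem_EI_future:
  "(\<mu>, \<nu>, \<xi>) \<in> full_behavior Q \<Longrightarrow> future_string \<nu> k l \<in> EI Q l l (\<xi> k)"
  unfolding EI_future_iff by blast

lemma is_state_machine_transitionD:
  "is_state_machine Q \<Longrightarrow> (x, u, y, x') \<in> Sdelta Q \<Longrightarrow>
    x \<in> SX Q \<and> u \<in> SU Q \<and> y \<in> SY Q \<and> x' \<in> SX Q"
  unfolding is_state_machine_def by auto

lemma is_state_machine_initialD: "is_state_machine Q \<Longrightarrow> x \<in> SX0 Q \<Longrightarrow> x \<in> SX Q"
  unfolding is_state_machine_def by auto

lemma full_behavior_splice:
  assumes Q: "is_state_machine Q"
    and traj1: "(\<mu>, \<nu>, \<xi>) \<in> full_behavior Q" "\<xi> k = x"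
    and step: "(x, u, y, x') \<in> Sdelta Q"
    and traj2: "(\<mu>', \<nu>', \<xi>') \<in> full_behavior Q" "\<xi>' j = x'"
  shows "\<exists>\<mu>'' \<nu>'' \<xi>''. (\<mu>'', \<nu>'', \<xi>'') \<in> full_behavior Q \<and>
    \<xi>'' k = x \<and> \<xi>'' (Suc k) = x' \<and> \<nu>'' k = y"
proof -
  define \<mu>'' where "\<mu>'' t = (if t < k then \<mu> t else if t = k then u else \<mu>' (t - Suc k + j))" for t
  define \<nu>'' where "\<nu>'' t = (if t < k then \<nu> t else if t = k then y else \<nu>' (t - Suc k + j))" for t
  define \<xi>'' where "\<xi>'' t = (if t \<le> k then \<xi> t else \<xi>' (t - Suc k + j))" for t
  note defs = \<mu>''_def \<nu>''_def \<xi>''_def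
  have "(\<xi>'' t, \<mu>'' t, \<nu>'' t, \<xi>'' (Suc t)) \<in> Sdelta Q" for t
  proof -
    consider "Suc t \<le> k" | "t = k" | "k < t" by linarith
    then show ?thesis
    proof cases
      case 3
      then have "Suc t - Suc k + j = Suc (t - Suc k + j)" by simp
      with 3 show ?thesis unfolding defs using full_behaviorD(5)[OF traj2(1)] by auto
    qed (use traj1 traj2 step full_behaviorD(5)[OF traj1(1)] in \<open>auto simp: defs\<close>)
  qed
  moreover have "\<mu>'' t \<in> SU Q \<and> \<nu>'' t \<in> SY Q \<and> \<xi>'' t \<in> SX Q" for t
    using full_behaviorD[OF traj1(1)] full_behaviorD[OF traj2(1)]
      is_state_machine_transitionD[OF Q step] by (auto simp: defs)
  moreover have "\<xi>'' 0 \<in> SX0 Q" using full_behaviorD(4)[OF traj1(1)] by (simp add: defs)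
  ultimately have "(\<mu>'', \<nu>'', \<xi>'') \<in> full_behavior Q" unfolding full_behavior_def by blast
  moreover have "\<xi>'' k = x" "\<xi>'' (Suc k) = x'" "\<nu>'' k = y" using traj1 traj2 by (auto simp: defs)
  ultimately show ?thesis by blast
qed

lemma future_unique_future_string_eq:
  assumes "future_unique Q l l"
    and "(\<mu>, \<nu>, \<xi>) \<in> full_behavior Q" "(\<mu>', \<nu>', \<xi>') \<in> full_behavior Q" "\<xi> k = \<xi>' k'"
  shows "future_string \<nu> k l = future_string \<nu>' k' l"
proof -
  have "future_string \<nu> k l \<in> EI Q l l (\<xi> k)" "future_string \<nu>' k' l \<in> EI Q l l (\<xi> k)"
    using future_string_mem_EI_future assms(2,3) assms(4)[symmetric] by metis+
  with assms(1) full_behaviorD(3)[OF assms(2)]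
  have "str_restr (future_string \<nu> k l) 0 (int l - 1) = str_restr (future_string \<nu>' k' l) 0 (int l - 1)"
    unfolding future_unique_def by fastforce
  then show ?thesis by (simp add: str_restr_eq_take)
qed

lemma future_unique_EI_future_eq:
  assumes "future_unique Q l l" "\<zeta> \<in> EI Q l l x" "\<zeta>' \<in> EI Q l l x"
  shows "\<zeta> = \<zeta>'"
  using assms(2,3) future_unique_future_string_eq[OF assms(1)] unfolding EI_future_iff by metis

lemma future_unique_EI_future_singleton:
  "future_unique Q l l \<Longrightarrow> \<zeta> \<in> EI Q l l x \<Longrightarrow> EI Q l l x = {\<zeta>}"
  using future_unique_EI_future_eq[of Q l \<zeta> x] by blast

lemma live_reachable_initial:
  "live_reachable Q \<Longrightarrow> x \<in> SX0 Q \<Longrightarrow> \<exists>\<mu> \<nu> \<xi>. (\<mu>, \<nu>, \<xi>) \<in> full_behavior Q \<and> \<xi> 0 = x"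
  unfolding live_reachable_def by blast

lemma live_reachable_reachable:
  "live_reachable Q \<Longrightarrow> x \<in> SX Q \<Longrightarrow> \<exists>\<mu> \<nu> \<xi> k. (\<mu>, \<nu>, \<xi>) \<in> full_behavior Q \<and> \<xi> k = x"
  unfolding live_reachable_def by blast

lemma live_reachable_EI_future_nonempty:
  assumes "live_reachable Q" "x \<in> SX Q"
  shows "\<exists>\<zeta>. \<zeta> \<in> EI Q l l x"
proof -
  obtain \<mu> \<nu> \<xi> k where "(\<mu>, \<nu>, \<xi>) \<in> full_behavior Q" "\<xi> k = x"
    using live_reachable_reachable[OF assms] by blast
  then show ?thesis using future_string_mem_EI_future by metis
qed

lemma future_unique_transition_future_strings:
  assumes Q: "is_state_machine Q" "live_reachable Q" and fu: "future_unique Q l l"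
    and step: "(x, u, y, x') \<in> Sdelta Q" and \<zeta>: "\<zeta> \<in> EI Q l l x" and \<zeta>': "\<zeta>' \<in> EI Q l l x'"
  shows "\<exists>\<mu> \<nu> \<xi> k. (\<mu>, \<nu>, \<xi>) \<in> full_behavior Q \<and> \<nu> k = y \<and>
    \<zeta> = future_string \<nu> k l \<and> \<zeta>' = future_string \<nu> (Suc k) l"
proof -
  have "x \<in> SX Q" "x' \<in> SX Q" using is_state_machine_transitionD[OF Q(1) step] by auto
  then obtain \<mu>\<^sub>1 \<nu>\<^sub>1 \<xi>\<^sub>1 k \<mu>\<^sub>2 \<nu>\<^sub>2 \<xi>\<^sub>2 j
    where traj\<^sub>1: "(\<mu>\<^sub>1, \<nu>\<^sub>1, \<xi>\<^sub>1) \<in> full_behavior Q" "\<xi>\<^sub>1 k = x"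
      and traj\<^sub>2: "(\<mu>\<^sub>2, \<nu>\<^sub>2, \<xi>\<^sub>2) \<in> full_behavior Q" "\<xi>\<^sub>2 j = x'"
    using live_reachable_reachable[OF Q(2)] by meson
  obtain \<mu> \<nu> \<xi> where traj: "(\<mu>, \<nu>, \<xi>) \<in> full_behavior Q"
      "\<xi> k = x" "\<xi> (Suc k) = x'" "\<nu> k = y"
    using full_behavior_splice[OF Q(1) traj\<^sub>1 step traj\<^sub>2] by blast
  have "future_string \<nu> k l \<in> EI Q l l x" "future_string \<nu> (Suc k) l \<in> EI Q l l x'"
    using future_string_mem_EI_future[OF traj(1)] traj(2,3) by metis+
  then have "\<zeta> = future_string \<nu> k l" "\<zeta>' = future_string \<nu> (Suc k) l"
    using future_unique_EI_future_eq[OF fu] \<zeta> \<zeta>' by blast+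
  with traj show ?thesis by blast
qed

lemma SX_abstract_sm [simp]: "SX (abstract_sm Q l m) = (\<Union>x\<in>SX Q. EI Q l m x)"
  by (simp add: abstract_sm_def)

lemma SX0_abstract_sm [simp]: "SX0 (abstract_sm Q l m) = (\<Union>x\<in>SX0 Q. EI Q l m x)"
  by (simp add: abstract_sm_def)

lemma abstract_sm_transitionD:
  "(\<zeta>, u, y, \<zeta>') \<in> Sdelta (abstract_sm Q l m) \<Longrightarrow>
    \<exists>x\<in>SX Q. \<exists>x'\<in>SX Q. \<zeta> \<in> EI Q l m x \<and> \<zeta>' \<in> EI Q l m x' \<and> (x, u, y, x') \<in> Sdelta Q"
  unfolding abstract_sm_def by simp

lemma abstract_sm_future_transition_iff:
  assumes "1 \<le> l" "length \<zeta> = l" "length \<zeta>' = l"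
  shows "(\<zeta>, u, y, \<zeta>') \<in> Sdelta (abstract_sm Q l l) \<longleftrightarrow> \<zeta> = Some y # take (l - 1) \<zeta>' \<and>
     (\<exists>x\<in>SX Q. \<exists>x'\<in>SX Q. \<zeta> \<in> EI Q l l x \<and> \<zeta>' \<in> EI Q l l x' \<and> (x, u, y, x') \<in> Sdelta Q)"
proof -
  have "str_restr \<zeta>' 0 (int l - 2) = take (l - 1) \<zeta>'"
    using str_restr_eq_take[of "l - 1" \<zeta>'] assms by (simp add: of_nat_diff)
  then have "str_restr ([Some y] @ str_restr \<zeta>' 0 (int l - 2)) 0 (int l - 1) = Some y # take (l - 1) \<zeta>'"
    using str_restr_eq_take[of l "Some y # take (l - 1) \<zeta>'"] assms by simp
  moreover have "str_restr \<zeta> 0 (int l - 1) = \<zeta>" using str_restr_eq_take[of l \<zeta>] assms by simp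
  ultimately show ?thesis unfolding abstract_sm_def by (simp add: str_restr_empty)
qed

lemma abstract_sm_past_transition_iff:
  assumes "1 \<le> l" "length \<eta> = l" "length \<eta>' = l"
  shows "(\<eta>, u, y, \<eta>') \<in> Sdelta (abstract_sm Q l 0) \<longleftrightarrow> \<eta>' = tl \<eta> @ [Some y] \<and>
     (\<exists>x\<in>SX Q. \<exists>x'\<in>SX Q. \<eta> \<in> EI Q l 0 x \<and> \<eta>' \<in> EI Q l 0 x' \<and> (x, u, y, x') \<in> Sdelta Q)"
proof -
  have "str_restr \<eta> 0 (int l - 1) = \<eta>" "str_restr \<eta>' 0 (int l - 1) = \<eta>'"
    using str_restr_eq_take[of l \<eta>] str_restr_eq_take[of l \<eta>'] assms by simp_all
  moreover have "str_restr (\<eta> @ [Some y]) 1 (int l) = tl \<eta> @ [Some y]"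
    using str_restr_eq_tl[of "\<eta> @ [Some y]" l] assms by (cases \<eta>) auto
  ultimately show ?thesis unfolding abstract_sm_def by (simp add: str_restr_empty)
qed

lemma future_unique_abstract_sm_transition:
  assumes Q: "is_state_machine Q" "live_reachable Q" and l: "1 \<le> l" and fu: "future_unique Q l l"
    and step: "(x, u, y, x') \<in> Sdelta Q" and \<zeta>: "\<zeta> \<in> EI Q l l x" and \<zeta>': "\<zeta>' \<in> EI Q l l x'"
  shows "(\<zeta>, u, y, \<zeta>') \<in> Sdelta (abstract_sm Q l l)"
proof -
  obtain \<nu> k where "\<nu> k = y" "\<zeta> = future_string \<nu> k l" "\<zeta>' = future_string \<nu> (Suc k) l"
    using future_unique_transition_future_strings[OF Q fu step \<zeta> \<zeta>'] by blast
  then have "\<zeta> = Some y # take (l - 1) \<zeta>'" using future_string_Suc[OF l, of \<nu> k] by simp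
  moreover have "x \<in> SX Q" "x' \<in> SX Q" using is_state_machine_transitionD[OF Q(1) step] by auto
  ultimately show ?thesis
    unfolding abstract_sm_future_transition_iff[OF l length_EI_future[OF \<zeta>] length_EI_future[OF \<zeta>']]
    using \<zeta> \<zeta>' step by blast
qed

lemma quotient_sm_bisimilar_abstract_sm:
  assumes Q: "is_state_machine Q" "live_reachable Q" and l: "1 \<le> l" and fu: "future_unique Q l l"
  shows "bisimilar_Y (quotient_sm Q l) (abstract_sm Q l l)"
proof -
  define R where "R = {(S, \<zeta>). S \<in> SX (quotient_sm Q l) \<and> \<zeta> \<in> S}"
  have R_iff: "(S, \<zeta>) \<in> R \<longleftrightarrow> (\<exists>x\<in>SX Q. S = EI Q l l x \<and> \<zeta> \<in> EI Q l l x)" for S \<zeta>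
    unfolding R_def quotient_sm_def by auto
  note X0 = is_state_machine_initialD[OF Q(1)]
  have "sim_rel_Y (quotient_sm Q l) (abstract_sm Q l l) R"
    unfolding sim_rel_Y_def
  proof (intro conjI allI impI ballI)
    show "R \<subseteq> SX (quotient_sm Q l) \<times> SX (abstract_sm Q l l)"
      unfolding R_def by (auto simp: quotient_sm_def)
  next
    fix S assume "S \<in> SX0 (quotient_sm Q l)"
    then obtain x where x: "x \<in> SX0 Q" "S = EI Q l l x" unfolding quotient_sm_def by auto
    then obtain \<zeta> where "\<zeta> \<in> EI Q l l x" using live_reachable_EI_future_nonempty[OF Q(2) X0] by blast
    with x X0 show "\<exists>\<zeta>\<in>SX0 (abstract_sm Q l l). (S, \<zeta>) \<in> R"
      unfolding R_iff by auto
  next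
    fix S \<zeta> u y S'
    assume "(S, \<zeta>) \<in> R \<and> (S, u, y, S') \<in> Sdelta (quotient_sm Q l)"
    then obtain x x' where x: "x' \<in> SX Q" "S' = EI Q l l x'" "(x, u, y, x') \<in> Sdelta Q"
        and \<zeta>: "\<zeta> \<in> EI Q l l x"
      unfolding R_iff quotient_sm_def by auto
    obtain \<zeta>' where \<zeta>': "\<zeta>' \<in> EI Q l l x'" using live_reachable_EI_future_nonempty[OF Q(2) x(1)] by blast
    have "(\<zeta>, u, y, \<zeta>') \<in> Sdelta (abstract_sm Q l l)"
      using future_unique_abstract_sm_transition[OF Q l fu x(3) \<zeta> \<zeta>'] .
    moreover have "(S', \<zeta>') \<in> R" unfolding R_iff using x \<zeta>' by blast
    ultimately show "\<exists>u' y' \<zeta>'. (\<zeta>, u', y', \<zeta>') \<in> Sdelta (abstract_sm Q l l) \<and> (S', \<zeta>') \<in> R \<and> y = y'"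
      by blast
  qed
  moreover have "sim_rel_Y (abstract_sm Q l l) (quotient_sm Q l) (converse R)"
    unfolding sim_rel_Y_def
  proof (intro conjI allI impI ballI)
    show "converse R \<subseteq> SX (abstract_sm Q l l) \<times> SX (quotient_sm Q l)"
      unfolding R_def by (auto simp: quotient_sm_def)
  next
    fix \<zeta> assume "\<zeta> \<in> SX0 (abstract_sm Q l l)"
    then obtain x where "x \<in> SX0 Q" "\<zeta> \<in> EI Q l l x" by auto
    with X0 show "\<exists>S\<in>SX0 (quotient_sm Q l). (\<zeta>, S) \<in> converse R"
      unfolding converse_iff R_iff by (auto simp: quotient_sm_def)
  next
    fix \<zeta> S u y \<zeta>'
    assume "(\<zeta>, S) \<in> converse R \<and> (\<zeta>, u, y, \<zeta>') \<in> Sdelta (abstract_sm Q l l)"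
    then obtain x\<^sub>S where "S = EI Q l l x\<^sub>S" "\<zeta> \<in> EI Q l l x\<^sub>S"
        and step\<^sub>A: "(\<zeta>, u, y, \<zeta>') \<in> Sdelta (abstract_sm Q l l)"
      unfolding converse_iff R_iff by auto
    moreover obtain x x' where step: "x \<in> SX Q" "x' \<in> SX Q" "(x, u, y, x') \<in> Sdelta Q"
        and \<zeta>: "\<zeta> \<in> EI Q l l x" and \<zeta>': "\<zeta>' \<in> EI Q l l x'"
      using abstract_sm_transitionD[OF step\<^sub>A] by blast
    \<comment> \<open>by future uniqueness the class \<open>S\<close> is \<open>{\<zeta>}\<close>, which is also the class of \<open>x\<close>\<close>
    ultimately have "S = EI Q l l x" using future_unique_EI_future_singleton[OF fu] by metis
    with step have "(S, u, y, EI Q l l x') \<in> Sdelta (quotient_sm Q l)"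
      unfolding quotient_sm_def by auto
    moreover have "(\<zeta>', EI Q l l x') \<in> converse R" unfolding converse_iff R_iff using step \<zeta>' by blast
    ultimately show "\<exists>u' y' S'. (S, u', y', S') \<in> Sdelta (quotient_sm Q l) \<and> (\<zeta>', S') \<in> converse R \<and> y = y'"
      by blast
  qed
  ultimately show ?thesis unfolding bisimilar_Y_def by blast
qed

definition past_step :: "('x, 'u, 'y) sm \<Rightarrow> nat \<Rightarrow> 'y option list \<Rightarrow> 'y option \<Rightarrow> bool" where
  "past_step Q l \<eta> c \<longleftrightarrow>
    (\<exists>u y. c = Some y \<and> (\<eta>, u, y, tl \<eta> @ [c]) \<in> Sdelta (abstract_sm Q l 0))"

definition past_admissible :: "('x, 'u, 'y) sm \<Rightarrow> nat \<Rightarrow> 'y option list \<Rightarrow> bool" where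
  "past_admissible Q l s \<longleftrightarrow>
    (\<forall>i. i + l < length s \<longrightarrow> past_step Q l (take l (drop i s)) (s ! (i + l)))"

lemma past_step_past_string:
  assumes l: "1 \<le> l" and traj: "(\<mu>, \<nu>, \<xi>) \<in> full_behavior Q"
  shows "past_step Q l (past_string \<nu> t l) (Some (\<nu> t))"
proof -
  have "(past_string \<nu> t l, \<mu> t, \<nu> t, past_string \<nu> (Suc t) l) \<in> Sdelta (abstract_sm Q l 0)"
    unfolding abstract_sm_past_transition_iff[OF l length_past_string length_past_string]
    using past_string_Suc[OF l] past_string_mem_EI_past[OF traj] full_behaviorD[OF traj] by blast
  then show ?thesis unfolding past_step_def past_string_Suc[OF l] by blast
qed

lemma past_admissible_past_string:
  assumes "1 \<le> l" "(\<mu>, \<nu>, \<xi>) \<in> full_behavior Q" "L \<le> k + l"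
  shows "past_admissible Q l (past_string \<nu> k L)"
  unfolding past_admissible_def
proof (intro allI impI)
  fix i assume "i + l < length (past_string \<nu> k L)"
  then have "i + l \<le> L" "L \<le> k + i + l" "i + l < L" "L \<le> k + (i + l)" using assms(3) by auto
  then have "take l (drop i (past_string \<nu> k L)) = past_string \<nu> (k + i + l - L) l"
    and "past_string \<nu> k L ! (i + l) = Some (\<nu> (k + i + l - L))"
    using past_string_window[of i l L k \<nu>] past_string_nth[of "i + l" L k \<nu>] by (simp_all add: add.assoc)
  then show "past_step Q l (take l (drop i (past_string \<nu> k L))) (past_string \<nu> k L ! (i + l))"
    using past_step_past_string[OF assms(1,2)] by simp
qed

lemma past_admissible_tl:
  assumes "past_admissible Q l s"
  shows "past_admissible Q l (tl s)"
  unfolding past_admissible_def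
proof (intro allI impI)
  fix i assume i: "i + l < length (tl s)"
  then have "Suc i + l < length s" by simp
  with assms have "past_step Q l (take l (drop (Suc i) s)) (s ! (Suc i + l))"
    unfolding past_admissible_def by blast
  then show "past_step Q l (take l (drop i (tl s))) (tl s ! (i + l))"
    using i by (simp add: drop_Suc nth_tl)
qed

lemma past_admissible_snoc:
  assumes "past_admissible Q l s" "l \<le> length s" "past_step Q l (drop (length s - l) s) c"
  shows "past_admissible Q l (s @ [c])"
  unfolding past_admissible_def
proof (intro allI impI)
  fix i assume i: "i + l < length (s @ [c])"
  show "past_step Q l (take l (drop i (s @ [c]))) ((s @ [c]) ! (i + l))"
  proof (cases "i + l < length s")
    case True
    then have "take l (drop i (s @ [c])) = take l (drop i s)" "(s @ [c]) ! (i + l) = s ! (i + l)"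
      by (simp_all add: nth_append)
    with True assms(1) show ?thesis unfolding past_admissible_def by simp
  next
    case False
    with i have il: "i + l = length s" by simp
    then have "i = length s - l" by simp
    with il have "take l (drop i (s @ [c])) = drop (length s - l) s" "(s @ [c]) ! (i + l) = c"
      by simp_all
    with assms(3) show ?thesis by simp
  qed
qed

lemma future_unique_past_step_last:
  assumes Q: "is_state_machine Q" "live_reachable Q" and l: "1 \<le> l" and fu: "future_unique Q l l"
    and step: "(\<zeta>, u, y, \<zeta>') \<in> Sdelta (abstract_sm Q l l)"
  shows "past_step Q l \<zeta> (last \<zeta>')"
proof -
  obtain x x' where "(x, u, y, x') \<in> Sdelta Q" "\<zeta> \<in> EI Q l l x" "\<zeta>' \<in> EI Q l l x'"
    using abstract_sm_transitionD[OF step] by blast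
  then obtain \<mu> \<nu> \<xi> k where traj: "(\<mu>, \<nu>, \<xi>) \<in> full_behavior Q"
    and "\<zeta> = future_string \<nu> k l" "\<zeta>' = future_string \<nu> (Suc k) l"
    using future_unique_transition_future_strings[OF Q fu] by blast
  then have "\<zeta> = past_string \<nu> (k + l) l" "last \<zeta>' = Some (\<nu> (k + l))"
    using l by (simp_all add: past_string_add_self last_future_string)
  then show ?thesis using past_step_past_string[OF l traj] by simp
qed

lemma future_unique_past_admissible_initial:
  assumes Q: "is_state_machine Q" "live_reachable Q" and l: "1 \<le> l" and fu: "future_unique Q l l"
    and \<zeta>: "\<zeta> \<in> SX0 (abstract_sm Q l l)"
  shows "\<exists>\<eta>\<in>SX0 (abstract_sm Q l 0). past_admissible Q l (\<eta> @ \<zeta>)"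
proof -
  obtain x where x: "x \<in> SX0 Q" "\<zeta> \<in> EI Q l l x" using \<zeta> by auto
  obtain \<mu> \<nu> \<xi> where traj: "(\<mu>, \<nu>, \<xi>) \<in> full_behavior Q" "\<xi> 0 = x"
    using live_reachable_initial[OF Q(2) x(1)] by blast
  have "future_string \<nu> 0 l \<in> EI Q l l x" "past_string \<nu> 0 l \<in> EI Q l 0 x"
    using future_string_mem_EI_future[OF traj(1)] past_string_mem_EI_past[OF traj(1)] traj(2) by metis+
  then have "\<zeta> = future_string \<nu> 0 l" and \<eta>: "past_string \<nu> 0 l \<in> SX0 (abstract_sm Q l 0)"
    using future_unique_EI_future_eq[OF fu x(2)] x(1) by auto
  then have "past_admissible Q l (past_string \<nu> 0 l @ \<zeta>)"
    using past_admissible_past_string[OF l traj(1), where k = l and L = "2 * l"]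
    by (simp add: past_string_append_future_string)
  with \<eta> show ?thesis by blast
qed

lemma future_unique_past_admissible_step:
  assumes Q: "is_state_machine Q" "live_reachable Q" and l: "1 \<le> l" and fu: "future_unique Q l l"
    and \<eta>: "\<eta> \<in> SX (abstract_sm Q l 0)" and adm: "past_admissible Q l (\<eta> @ \<zeta>)"
    and step: "(\<zeta>, u, y, \<zeta>') \<in> Sdelta (abstract_sm Q l l)"
  shows "\<exists>u' \<eta>'. (\<eta>, u', y, \<eta>') \<in> Sdelta (abstract_sm Q l 0) \<and> past_admissible Q l (\<eta>' @ \<zeta>')"
proof -
  have lengths: "length \<eta> = l" "length \<zeta> = l" "length \<zeta>' = l"
    using \<eta> abstract_sm_transitionD[OF step] length_EI_past length_EI_future by auto
  have "\<zeta>' \<noteq> []" using lengths(3) l by auto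
  then obtain \<zeta>\<^sub>0 c where \<zeta>': "\<zeta>' = \<zeta>\<^sub>0 @ [c]"
    by (metis append_butlast_last_id)
  moreover have "\<zeta> = Some y # take (l - 1) \<zeta>'"
    using iffD1[OF abstract_sm_future_transition_iff[OF l lengths(2,3)] step] by (rule conjunct1)
  ultimately have \<zeta>: "\<zeta> = Some y # \<zeta>\<^sub>0" using lengths(3) by simp
  \<comment> \<open>the first window of \<open>\<eta> @ \<zeta>\<close> provides the step of the past machine\<close>
  have "take l (drop 0 (\<eta> @ \<zeta>)) = \<eta>" "(\<eta> @ \<zeta>) ! (0 + l) = Some y" "0 + l < length (\<eta> @ \<zeta>)"
    using lengths l \<zeta> by (simp_all add: nth_append)
  then have "past_step Q l \<eta> (Some y)"
    using adm unfolding past_admissible_def by metis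
  then obtain u' where step': "(\<eta>, u', y, tl \<eta> @ [Some y]) \<in> Sdelta (abstract_sm Q l 0)"
    unfolding past_step_def by blast
  \<comment> \<open>the remaining windows are shifted ones, plus the new last window \<open>\<zeta>\<close>\<close>
  have "\<eta> \<noteq> []" using lengths(1) l by auto
  then have "(tl \<eta> @ [Some y]) @ \<zeta>' = tl (\<eta> @ \<zeta>) @ [last \<zeta>']"
    and "drop (length (tl (\<eta> @ \<zeta>)) - l) (tl (\<eta> @ \<zeta>)) = \<zeta>"
    using lengths unfolding \<zeta>' \<zeta> by simp_all
  moreover have "past_step Q l \<zeta> (last \<zeta>')"
    using future_unique_past_step_last[OF Q l fu step] .
  ultimately have "past_admissible Q l ((tl \<eta> @ [Some y]) @ \<zeta>')"
    using past_admissible_snoc[OF past_admissible_tl[OF adm]] lengths by simp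
  with step' show ?thesis by blast
qed

lemma abstract_sm_future_simulated_by_past:
  assumes Q: "is_state_machine Q" "live_reachable Q" and l: "1 \<le> l" and fu: "future_unique Q l l"
  shows "simulated_by_Y (abstract_sm Q l l) (abstract_sm Q l 0)"
proof -
  define R where "R = {(\<zeta>, \<eta>). \<zeta> \<in> SX (abstract_sm Q l l) \<and> \<eta> \<in> SX (abstract_sm Q l 0) \<and>
     past_admissible Q l (\<eta> @ \<zeta>)}"
  have "sim_rel_Y (abstract_sm Q l l) (abstract_sm Q l 0) R"
    unfolding sim_rel_Y_def
  proof (intro conjI allI impI ballI)
    show "R \<subseteq> SX (abstract_sm Q l l) \<times> SX (abstract_sm Q l 0)" unfolding R_def by auto
  next
    fix \<zeta> assume \<zeta>: "\<zeta> \<in> SX0 (abstract_sm Q l l)"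
    then obtain \<eta> where "\<eta> \<in> SX0 (abstract_sm Q l 0)" "past_admissible Q l (\<eta> @ \<zeta>)"
      using future_unique_past_admissible_initial[OF Q l fu] by blast
    moreover have "SX0 (abstract_sm Q l m) \<subseteq> SX (abstract_sm Q l m)" for m
      using is_state_machine_initialD[OF Q(1)] by auto
    ultimately show "\<exists>\<eta>\<in>SX0 (abstract_sm Q l 0). (\<zeta>, \<eta>) \<in> R"
      using \<zeta> unfolding R_def by blast
  next
    fix \<zeta> \<eta> u y \<zeta>'
    assume "(\<zeta>, \<eta>) \<in> R \<and> (\<zeta>, u, y, \<zeta>') \<in> Sdelta (abstract_sm Q l l)"
    then have \<eta>: "\<eta> \<in> SX (abstract_sm Q l 0)" and "past_admissible Q l (\<eta> @ \<zeta>)"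
      and step: "(\<zeta>, u, y, \<zeta>') \<in> Sdelta (abstract_sm Q l l)"
      unfolding R_def by auto
    then obtain u' \<eta>' where step': "(\<eta>, u', y, \<eta>') \<in> Sdelta (abstract_sm Q l 0)"
      and "past_admissible Q l (\<eta>' @ \<zeta>')"
      using future_unique_past_admissible_step[OF Q l fu] by blast
    moreover have "\<zeta>' \<in> SX (abstract_sm Q l l)" "\<eta>' \<in> SX (abstract_sm Q l 0)"
      using abstract_sm_transitionD[OF step] abstract_sm_transitionD[OF step'] by auto
    ultimately show "\<exists>u' y' \<eta>'. (\<eta>, u', y', \<eta>') \<in> Sdelta (abstract_sm Q l 0) \<and> (\<zeta>', \<eta>') \<in> R \<and> y = y'"
      unfolding R_def by blast
  qed
  then show ?thesis unfolding simulated_by_Y_def by blast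
qed

theorem corollary13:
  fixes Q :: "('x, 'u, 'y) sm" and l :: nat
  assumes "standing_assms_Y Q"
    and "l \<ge> 1"
    and "future_unique Q l l"
  shows "bisimilar_Y (quotient_sm Q l) (abstract_sm Q l l) \<and>
         simulated_by_Y (abstract_sm Q l l) (abstract_sm Q l 0)"
proof -
  have Q: "is_state_machine Q" "live_reachable Q"
    using assms(1) unfolding standing_assms_Y_def by auto
  show ?thesis
    using quotient_sm_bisimilar_abstract_sm[OF Q assms(2,3)]
      abstract_sm_future_simulated_by_past[OF Q assms(2,3)] by blast
qed

end
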